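(* Let $G$ be a connected bisplit graph, and let $(X,Y,Z)$ be a partition of $V(G)$ into stable sets with $Y$ complete to $Z$ chosen so that $|Y\cup Z|$ is maximum among all such partitions. Let $X_Y$ be the set of vertices of $X$ all of whose neighbours lie in $Y$, and $X_Z$ the set of vertices of $X$ all of whose neighbours lie in $Z$. If $X_Y$ and $X_Z$ are both non-empty, then $G$ has the de Bruijn-Erd\H{o}s property: the metric space $(V(G), d_G)$ has a universal line or at least $|V(G)|$ distinct lines.
   Context: A connected graph $G$ is bisplit if its vertex set can be partitioned into three stable sets $X$, $Y$, $Z$ such that every vertex of $Y$ is adjacent to every vertex of $Z$. $d_G$ is the shortest-path distance. In a metric space $(V,\rho)$, an element $b$ is between $a$ and $c$ if $\rho(a,b)+\rho(b,c)=\rho(a,c)$; three elements are collinear if one is between the other two. For distinct $a,b\in V$, the line generated by $a$ and $b$ is the set consisting of $a$, $b$, and all $c$ such that $a,b,c$ are collinear. A line is universal if it equals $V$. *)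

theory Defs
  imports Main
begin

definition simple_graph :: "'a set \<Rightarrow> ('a \<Rightarrow> 'a \<Rightarrow> bool) \<Rightarrow> bool" where
  "simple_graph V E \<longleftrightarrow> finite V \<and>
     (\<forall>u v. E u v \<longrightarrow> u \<in> V \<and> v \<in> V) \<and>
     (\<forall>u v. E u v \<longrightarrow> E v u) \<and> (\<forall>u. \<not> E u u)"

definition is_walk :: "'a set \<Rightarrow> ('a \<Rightarrow> 'a \<Rightarrow> bool) \<Rightarrow> 'a list \<Rightarrow> bool" where
  "is_walk V E xs \<longleftrightarrow> xs \<noteq> [] \<and> set xs \<subseteq> V \<and>
     (\<forall>i. Suc i < length xs \<longrightarrow> E (xs ! i) (xs ! Suc i))"

definition connected_graph :: "'a set \<Rightarrow> ('a \<Rightarrow> 'a \<Rightarrow> bool) \<Rightarrow> bool" where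
  "connected_graph V E \<longleftrightarrow> simple_graph V E \<and> V \<noteq> {} \<and>
     (\<forall>u\<in>V. \<forall>v\<in>V. \<exists>xs. is_walk V E xs \<and> hd xs = u \<and> last xs = v)"

definition gdist :: "'a set \<Rightarrow> ('a \<Rightarrow> 'a \<Rightarrow> bool) \<Rightarrow> 'a \<Rightarrow> 'a \<Rightarrow> nat" where
  "gdist V E u v = (LEAST n. \<exists>xs. is_walk V E xs \<and> hd xs = u \<and> last xs = v \<and> length xs = Suc n)"

definition stable :: "('a \<Rightarrow> 'a \<Rightarrow> bool) \<Rightarrow> 'a set \<Rightarrow> bool" where
  "stable E S \<longleftrightarrow> (\<forall>u\<in>S. \<forall>v\<in>S. \<not> E u v)"

definition bisplit_partition ::
  "'a set \<Rightarrow> ('a \<Rightarrow> 'a \<Rightarrow> bool) \<Rightarrow> 'a set \<Rightarrow> 'a set \<Rightarrow> 'a set \<Rightarrow> bool" where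
  "bisplit_partition V E X Y Z \<longleftrightarrow>
     X \<union> Y \<union> Z = V \<and> X \<inter> Y = {} \<and> X \<inter> Z = {} \<and> Y \<inter> Z = {} \<and>
     stable E X \<and> stable E Y \<and> stable E Z \<and>
     (\<forall>y\<in>Y. \<forall>z\<in>Z. E y z)"

definition bisplit :: "'a set \<Rightarrow> ('a \<Rightarrow> 'a \<Rightarrow> bool) \<Rightarrow> bool" where
  "bisplit V E \<longleftrightarrow> connected_graph V E \<and> (\<exists>X Y Z. bisplit_partition V E X Y Z)"

definition between :: "('a \<Rightarrow> 'a \<Rightarrow> nat) \<Rightarrow> 'a \<Rightarrow> 'a \<Rightarrow> 'a \<Rightarrow> bool" where
  "between d a b c \<longleftrightarrow> d a b + d b c = d a c"

definition collinear3 :: "('a \<Rightarrow> 'a \<Rightarrow> nat) \<Rightarrow> 'a \<Rightarrow> 'a \<Rightarrow> 'a \<Rightarrow> bool" where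
  "collinear3 d a b c \<longleftrightarrow> between d b a c \<or> between d a b c \<or> between d a c b"

definition line :: "'a set \<Rightarrow> ('a \<Rightarrow> 'a \<Rightarrow> nat) \<Rightarrow> 'a \<Rightarrow> 'a \<Rightarrow> 'a set" where
  "line V d a b = {a, b} \<union> {c \<in> V. collinear3 d a b c}"

definition lines :: "'a set \<Rightarrow> ('a \<Rightarrow> 'a \<Rightarrow> nat) \<Rightarrow> 'a set set" where
  "lines V d = {line V d a b | a b. a \<in> V \<and> b \<in> V \<and> a \<noteq> b}"

definition de_bruijn_erdos :: "'a set \<Rightarrow> ('a \<Rightarrow> 'a \<Rightarrow> nat) \<Rightarrow> bool" where
  "de_bruijn_erdos V d \<longleftrightarrow> (\<exists>L\<in>lines V d. L = V) \<or> card (lines V d) \<ge> card V"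

end

theory Submission
  imports Defs
begin

(* Maximality of
   |Y \<union> Z| forces every a \<in> X_Y to miss some vertex of Y (otherwise a could be moved into Z), and
   symmetrically for X_Z. This makes the distances between the classes rigid: Y and Z are at
   distance 1, distinct vertices of Y (of Z) at distance 2, a \<in> X_Y is at distance 2 from Z and at
   distance 1 or 3 from each vertex of Y, X_Y and X_Z are at distance 3, and the remaining vertices
   of X, which have neighbours on both sides, are at distance 2 or 3 from the rest of X.
   Fix a0 \<in> X_Y, b0 \<in> X_Z and a non-neighbour y0 \<in> Y of a0, and assign to each vertex v the line
   through b0 and v if v \<in> Y or v \<in> X_Y - {a0}, and the line through a0 and v (through a0 and y0
   if v = a0) otherwise. The non-collinear triples needed are all either isosceles with sides
   s, s, t where 0 < t < 2s, or have all sides in {2, 3}; from this one reads off enough test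
   vertices on or off each assigned line to see that the assignment is injective, so there are at
   least |V| lines. *)

lemma is_walk_iff_successively:
  "is_walk V E xs \<longleftrightarrow> xs \<noteq> [] \<and> set xs \<subseteq> V \<and> successively E xs"
  unfolding is_walk_def successively_conv_nth by blast

lemma gdist_le_walk:
  assumes "is_walk V E xs"
  shows "gdist V E (hd xs) (last xs) \<le> length xs - 1"
proof -
  have "length xs = Suc (length xs - 1)"
    using assms unfolding is_walk_def by (cases xs) auto
  then show ?thesis
    unfolding gdist_def by (intro Least_le) (use assms in blast)
qed

lemma gdist_shortest_walk:
  assumes "connected_graph V E" "u \<in> V" "v \<in> V"
  obtains xs where "is_walk V E xs" "hd xs = u" "last xs = v"
    "length xs = Suc (gdist V E u v)"
proof -
  obtain xs where xs: "is_walk V E xs" "hd xs = u" "last xs = v"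
    using assms unfolding connected_graph_def by blast
  then have "length xs = Suc (length xs - 1)"
    unfolding is_walk_def by (cases xs) auto
  with xs have "\<exists>n xs. is_walk V E xs \<and> hd xs = u \<and> last xs = v \<and> length xs = Suc n"
    by blast
  then have "\<exists>xs. is_walk V E xs \<and> hd xs = u \<and> last xs = v \<and> length xs = Suc (gdist V E u v)"
    unfolding gdist_def by (rule LeastI_ex)
  with that show ?thesis by blast
qed

lemma gdist_le_path:
  assumes "simple_graph V E" "successively E (u # xs)" "xs \<noteq> []"
  shows "gdist V E u (last xs) \<le> length xs"
proof -
  have edge_V: "E a b \<Longrightarrow> a \<in> V \<and> b \<in> V" for a b
    using assms(1) unfolding simple_graph_def by blast
  have "set (u # xs) \<subseteq> V"
    using assms(2,3)
  proof (induction xs arbitrary: u)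
    case (Cons x xs)
    then show ?case by (cases xs) (auto dest: edge_V)
  qed simp
  then have "is_walk V E (u # xs)"
    using assms(2) by (simp add: is_walk_iff_successively)
  then show ?thesis
    using gdist_le_walk[of V E "u # xs"] assms(3) by simp
qed

lemma gdist_sym:
  assumes "simple_graph V E"
  shows "gdist V E u v = gdist V E v u"
proof -
  have swap: "(\<lambda>x y. E y x) = E"
    using assms unfolding simple_graph_def by blast
  have "is_walk V E (rev xs) \<longleftrightarrow> is_walk V E xs" for xs
    unfolding is_walk_iff_successively successively_rev swap by simp
  then have "(\<exists>xs. is_walk V E xs \<and> hd xs = u \<and> last xs = v \<and> length xs = Suc n) \<longleftrightarrow>
             (\<exists>xs. is_walk V E xs \<and> hd xs = v \<and> last xs = u \<and> length xs = Suc n)" for n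
    by (metis hd_rev last_rev length_rev rev_rev_ident)
  then show ?thesis
    unfolding gdist_def by simp
qed

lemma gdist_less_3_cases:
  assumes "connected_graph V E" "u \<in> V" "v \<in> V" "gdist V E u v < 3"
  obtains "u = v" "gdist V E u v = 0"
    | "E u v" "gdist V E u v = 1"
    | p where "E u p" "E p v" "gdist V E u v = 2"
proof -
  obtain xs where xs: "is_walk V E xs" "hd xs = u" "last xs = v"
    "length xs = Suc (gdist V E u v)"
    using gdist_shortest_walk[OF assms(1-3)] .
  have walk: "successively E xs"
    using xs(1) by (simp add: is_walk_iff_successively)
  consider "gdist V E u v = 0" | "gdist V E u v = 1" | "gdist V E u v = 2"
    using assms(4) by linarith
  then show ?thesis
  proof cases
    case 1
    then show ?thesis using that(1) xs(2-4) by (auto simp: length_Suc_conv)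
  next
    case 2
    then show ?thesis using that(2) walk xs(2-4) by (auto simp: length_Suc_conv)
  next
    case 3
    then show ?thesis using that(3) walk xs(2-4) by (auto simp: length_Suc_conv numeral_2_eq_2)
  qed
qed

lemma gdist_ge_1:
  assumes "connected_graph V E" "u \<in> V" "v \<in> V" "u \<noteq> v"
  shows "1 \<le> gdist V E u v"
  using assms(4) by (cases "gdist V E u v < 3") (auto elim: gdist_less_3_cases[OF assms(1-3)])

lemma gdist_ge_2:
  assumes "connected_graph V E" "u \<in> V" "v \<in> V" "u \<noteq> v" "\<not> E u v"
  shows "2 \<le> gdist V E u v"
  using assms(4,5) by (cases "gdist V E u v < 3") (auto elim: gdist_less_3_cases[OF assms(1-3)])

lemma gdist_ge_3:
  assumes "connected_graph V E" "u \<in> V" "v \<in> V" "u \<noteq> v" "\<not> E u v"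
    and "\<nexists>p. E u p \<and> E p v"
  shows "3 \<le> gdist V E u v"
  using assms(4-6) by (cases "gdist V E u v < 3") (auto elim: gdist_less_3_cases[OF assms(1-3)])

lemma line_commute:
  assumes "\<And>x y. d x y = d y x"
  shows "line V d p q = line V d q p"
  using assms unfolding line_def collinear3_def between_def by (auto simp: add.commute)

lemma mem_line_iff:
  "c \<in> line V d p q \<longleftrightarrow> c = p \<or> c = q \<or> c \<in> V \<and> collinear3 d p q c"
  unfolding line_def by blast

lemma notin_line_isosceles:
  assumes "\<And>x y. d x y = d y x" "c \<noteq> p" "c \<noteq> q"
    and "d p c = d p q" "0 < d q c" "d q c < 2 * d p q"
  shows "c \<notin> line V d p q"
  using assms unfolding mem_line_iff collinear3_def between_def by (metis add_cancel_left_right mult_2 not_gr0 less_irrefl)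

lemma notin_line_short_sides:
  assumes "\<And>x y. d x y = d y x" "c \<noteq> p" "c \<noteq> q"
    and "k \<le> d p q" "k \<le> d p c" "k \<le> d q c" "d p q < 2 * k" "d p c < 2 * k" "d q c < 2 * k"
  shows "c \<notin> line V d p q"
  using assms unfolding mem_line_iff collinear3_def between_def by (metis add_le_mono mult_2 not_le)

lemma de_bruijn_erdos_if_inj_on:
  assumes "finite V" "inj_on f V" "f ` V \<subseteq> lines V d"
  shows "de_bruijn_erdos V d"
proof -
  have "lines V d \<subseteq> (\<lambda>(p, q). line V d p q) ` (V \<times> V)"
    unfolding lines_def by auto
  then have "finite (lines V d)"
    using assms(1) finite_subset by blast
  then have "card V \<le> card (lines V d)"
    using card_inj_on_le[OF assms(2,3)] by blast
  then show ?thesis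
    unfolding de_bruijn_erdos_def by blast
qed

lemma inj_on_Un_disjoint_images:
  "inj_on f A \<Longrightarrow> inj_on f B \<Longrightarrow> f ` A \<inter> f ` B = {} \<Longrightarrow> inj_on f (A \<union> B)"
  by (auto simp: inj_on_Un)

lemma connected_graph_neighbour:
  assumes "connected_graph V E" "u \<in> V" "v \<in> V" "u \<noteq> v"
  obtains w where "E u w"
proof -
  obtain xs where xs: "is_walk V E xs" "hd xs = u" "last xs = v"
    using assms(1-3) unfolding connected_graph_def by blast
  then obtain w ys where "xs = u # w # ys"
    using assms(4) unfolding is_walk_def by (metis last_ConsL list.collapse)
  with xs(1) have "E u w"
    by (simp add: is_walk_iff_successively)
  with that show ?thesis .
qed

locale maximal_bisplit =
  fixes V :: "'a set" and E :: "'a \<Rightarrow> 'a \<Rightarrow> bool" and X Y Z :: "'a set"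
  assumes connected: "connected_graph V E"
    and partition: "bisplit_partition V E X Y Z"
    and maximal: "\<forall>X' Y' Z'. bisplit_partition V E X' Y' Z' \<longrightarrow> card (Y' \<union> Z') \<le> card (Y \<union> Z)"
begin

abbreviation d :: "'a \<Rightarrow> 'a \<Rightarrow> nat" where
  "d \<equiv> gdist V E"

definition X_Y :: "'a set" where
  "X_Y = {x \<in> X. \<forall>w. E x w \<longrightarrow> w \<in> Y}"

lemma simple: "simple_graph V E"
  using connected unfolding connected_graph_def by blast

lemma finite_V: "finite V"
  using simple unfolding simple_graph_def by blast

lemma edge_sym: "E u v \<Longrightarrow> E v u"
  using simple unfolding simple_graph_def by blast

lemma edge_in_V: "E u v \<Longrightarrow> u \<in> V" "E u v \<Longrightarrow> v \<in> V"
  using simple unfolding simple_graph_def by blast+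

lemma edge_irrefl: "\<not> E u u"
  using simple unfolding simple_graph_def by blast

lemma V_eq: "V = X \<union> Y \<union> Z"
  using partition unfolding bisplit_partition_def by blast

lemma disjoint: "X \<inter> Y = {}" "X \<inter> Z = {}" "Y \<inter> Z = {}"
  using partition unfolding bisplit_partition_def by blast+

lemma stable: "stable E X" "stable E Y" "stable E Z"
  using partition unfolding bisplit_partition_def by blast+

lemma Y_Z_edge: "y \<in> Y \<Longrightarrow> z \<in> Z \<Longrightarrow> E y z"
  using partition unfolding bisplit_partition_def by blast

lemma swap: "maximal_bisplit V E X Z Y"
proof
  show "connected_graph V E" by (fact connected)
  show "bisplit_partition V E X Z Y"
    using partition edge_sym unfolding bisplit_partition_def by blast
  show "\<forall>X' Z' Y'. bisplit_partition V E X' Z' Y' \<longrightarrow> card (Z' \<union> Y') \<le> card (Z \<union> Y)"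
    using maximal edge_sym unfolding bisplit_partition_def by (metis Un_commute)
qed

end

(* Exchanging Y and Z turns X_Y into X_Z: each lemma about X_Y proved in one of the context blocks
   below is available for X_Z as swap.<name> from the next block on. *)
sublocale maximal_bisplit \<subseteq> swap: maximal_bisplit V E X Z Y
  by (rule swap)

context maximal_bisplit
begin

abbreviation X_Z :: "'a set" where
  "X_Z \<equiv> swap.X_Y"

abbreviation X_mixed :: "'a set" where
  "X_mixed \<equiv> X - X_Y - X_Z"

lemma X_Y_subset: "X_Y \<subseteq> X"
  unfolding X_Y_def by blast

lemma X_Y_edge: "a \<in> X_Y \<Longrightarrow> E a w \<Longrightarrow> w \<in> Y"
  unfolding X_Y_def by blast

lemma X_Y_nonneighbour:
  assumes "a \<in> X_Y"
  obtains y where "y \<in> Y" "\<not> E a y"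
proof (rule ccontr)
  assume "\<not> thesis"
  with that have complete: "\<forall>y\<in>Y. E a y" by blast
  have a: "a \<in> X" "\<And>w. E a w \<Longrightarrow> w \<in> Y"
    using assms unfolding X_Y_def by blast+
  have "bisplit_partition V E (X - {a}) Y (insert a Z)"
    unfolding bisplit_partition_def
  proof (intro conjI)
    show "X - {a} \<union> Y \<union> insert a Z = V"
      using V_eq a(1) by blast
    show "(X - {a}) \<inter> Y = {}" "(X - {a}) \<inter> insert a Z = {}" "Y \<inter> insert a Z = {}"
      using disjoint a(1) by blast+
    show "stable E (X - {a})" "stable E Y"
      using stable unfolding stable_def by blast+
    show "stable E (insert a Z)"
      using stable(3) a(2) disjoint(3) edge_irrefl edge_sym unfolding stable_def by blast
    show "\<forall>y\<in>Y. \<forall>z\<in>insert a Z. E y z"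
      using Y_Z_edge complete edge_sym by blast
  qed
  then have "card (insert a (Y \<union> Z)) \<le> card (Y \<union> Z)"
    using maximal by fastforce
  moreover have "finite (Y \<union> Z)" "a \<notin> Y \<union> Z"
    using finite_V V_eq disjoint a(1) by (blast intro: finite_subset)+
  ultimately show False by simp
qed

lemma X_Y_neighbour:
  assumes "a \<in> X_Y"
  obtains y where "y \<in> Y" "E a y"
proof -
  have a: "a \<in> X" "\<And>w. E a w \<Longrightarrow> w \<in> Y"
    using assms unfolding X_Y_def by blast+
  obtain y where "y \<in> Y" "\<not> E a y"
    using X_Y_nonneighbour[OF assms] .
  moreover have "a \<in> V" "y \<in> V" "a \<noteq> y"
    using V_eq disjoint(1) a(1) \<open>y \<in> Y\<close> by blast+
  ultimately obtain w where "E a w"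
    using connected_graph_neighbour[OF connected] by metis
  with a(2) that show ?thesis by blast
qed

lemma not_X_Y_Z_neighbour:
  assumes "x \<in> X" "x \<notin> X_Y"
  obtains z where "z \<in> Z" "E x z"
proof -
  obtain w where "E x w" "w \<notin> Y"
    using assms unfolding X_Y_def by blast
  moreover have "w \<notin> X"
    using stable(1) assms(1) \<open>E x w\<close> unfolding stable_def by blast
  ultimately show ?thesis
    using that edge_in_V V_eq by blast
qed

lemma X_Y_X_Z_disjoint: "X_Y \<inter> X_Z = {}"
proof -
  have "a \<notin> X_Z" if "a \<in> X_Y" for a
    using X_Y_neighbour[OF that] disjoint(3) unfolding swap.X_Y_def by blast
  then show ?thesis by blast
qed

end

context maximal_bisplit
begin

lemma dist_sym: "d u v = d v u"
  by (rule gdist_sym[OF simple])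

lemma dist_le_path: "successively E (u # xs) \<Longrightarrow> xs \<noteq> [] \<Longrightarrow> d u (last xs) \<le> length xs"
  by (rule gdist_le_path[OF simple])

lemma dist_edge: "E u v \<Longrightarrow> d u v = 1"
  using dist_le_path[of u "[v]"] gdist_ge_1[OF connected, of u v] edge_in_V edge_irrefl
  by fastforce

lemma dist_Y_Z: "y \<in> Y \<Longrightarrow> z \<in> Z \<Longrightarrow> d y z = 1"
  by (simp add: Y_Z_edge dist_edge)

lemma dist_Y_Y:
  assumes "Z \<noteq> {}" "y \<in> Y" "y' \<in> Y" "y \<noteq> y'"
  shows "d y y' = 2"
proof -
  obtain z where "z \<in> Z"
    using assms(1) by blast
  then have "d y y' \<le> 2"
    using dist_le_path[of y "[z, y']"] assms Y_Z_edge edge_sym by simp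
  moreover have "2 \<le> d y y'"
    using gdist_ge_2[OF connected] stable(2) assms V_eq unfolding stable_def by blast
  ultimately show ?thesis by simp
qed

lemma dist_X_Y_Z:
  assumes "a \<in> X_Y" "z \<in> Z"
  shows "d a z = 2"
proof -
  obtain y where "y \<in> Y" "E a y"
    using X_Y_neighbour[OF assms(1)] .
  then have "d a z \<le> 2"
    using dist_le_path[of a "[y, z]"] assms Y_Z_edge by simp
  moreover have "a \<in> V" "z \<in> V" "a \<noteq> z" "\<not> E a z"
    using assms X_Y_subset X_Y_edge V_eq disjoint by blast+
  then have "2 \<le> d a z"
    by (rule gdist_ge_2[OF connected])
  ultimately show ?thesis by simp
qed

lemma dist_X_Y_Y:
  assumes "Z \<noteq> {}" "a \<in> X_Y" "y \<in> Y" "\<not> E a y"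
  shows "d a y = 3"
proof -
  obtain y' z where "y' \<in> Y" "E a y'" "z \<in> Z"
    using X_Y_neighbour[OF assms(2)] assms(1) by blast
  then have "d a y \<le> 3"
    using dist_le_path[of a "[y', z, y]"] assms Y_Z_edge edge_sym by simp
  moreover have "a \<in> V" "y \<in> V" "a \<noteq> y" "\<nexists>p. E a p \<and> E p y"
    using assms X_Y_subset X_Y_edge V_eq disjoint stable(2) unfolding stable_def by blast+
  then have "3 \<le> d a y"
    using assms(4) by (intro gdist_ge_3[OF connected])
  ultimately show ?thesis by simp
qed

lemma dist_X_Y_X_Z:
  assumes "a \<in> X_Y" "b \<in> X_Z"
  shows "d a b = 3"
proof -
  obtain y z where "y \<in> Y" "E a y" "z \<in> Z" "E b z"
    using X_Y_neighbour[OF assms(1)] swap.X_Y_neighbour[OF assms(2)] by metis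
  then have "d a b \<le> 3"
    using dist_le_path[of a "[y, z, b]"] Y_Z_edge edge_sym by simp
  moreover have "a \<in> V" "b \<in> V" "a \<noteq> b" "\<not> E a b" "\<nexists>p. E a p \<and> E p b"
    using assms X_Y_subset swap.X_Y_subset X_Y_edge swap.X_Y_edge X_Y_X_Z_disjoint V_eq disjoint(3)
      stable(1) edge_sym unfolding stable_def by blast+
  then have "3 \<le> d a b"
    by (intro gdist_ge_3[OF connected])
  ultimately show ?thesis by simp
qed

lemma dist_X_X: "x \<in> X \<Longrightarrow> x' \<in> X \<Longrightarrow> x \<noteq> x' \<Longrightarrow> 2 \<le> d x x'"
  using gdist_ge_2[OF connected] stable(1) V_eq unfolding stable_def by blast

lemma dist_ge_1: "u \<in> V \<Longrightarrow> v \<in> V \<Longrightarrow> u \<noteq> v \<Longrightarrow> 1 \<le> d u v"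
  by (rule gdist_ge_1[OF connected])

lemma dist_le_2_via_Y: "y \<in> Y \<Longrightarrow> E u y \<Longrightarrow> z \<in> Z \<Longrightarrow> d u z \<le> 2"
  using dist_le_path[of u "[y, z]"] Y_Z_edge by simp

lemma dist_le_3_via_Y_Z: "y \<in> Y \<Longrightarrow> E u y \<Longrightarrow> z \<in> Z \<Longrightarrow> E v z \<Longrightarrow> d u v \<le> 3"
  using dist_le_path[of u "[y, z, v]"] Y_Z_edge edge_sym by simp

lemma dist_X_Y_X_Y:
  assumes "Z \<noteq> {}" "a \<in> X_Y" "a' \<in> X_Y"
  shows "d a a' \<le> 4"
proof -
  obtain y y' z where "y \<in> Y" "E a y" "y' \<in> Y" "E a' y'" "z \<in> Z"
    using X_Y_neighbour assms by (metis ex_in_conv)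
  then show ?thesis
    using dist_le_path[of a "[y, z, y', a']"] Y_Z_edge edge_sym by simp
qed

lemma dist_X_le_3:
  assumes "x \<in> X" "x \<notin> X_Z" "x' \<in> X" "x' \<notin> X_Y"
  shows "d x x' \<le> 3"
proof -
  obtain y z where "y \<in> Y" "E x y" "z \<in> Z" "E x' z"
    using swap.not_X_Y_Z_neighbour not_X_Y_Z_neighbour assms by metis
  then show ?thesis
    by (rule dist_le_3_via_Y_Z)
qed

end

context maximal_bisplit
begin

lemma line_sym: "line V d p q = line V d q p"
  by (rule line_commute) (rule dist_sym)

lemma Y_subset_line_X_Y_Z:
  assumes "a \<in> X_Y" "z \<in> Z"
  shows "Y \<subseteq> line V d a z"
proof
  fix y assume "y \<in> Y"
  then have "d a z = 2" "d z y = 1" "y \<in> V"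
    using dist_X_Y_Z assms dist_Y_Z dist_sym V_eq by auto
  moreover have "d a y = 1 \<or> d a y = 3"
    using dist_edge dist_X_Y_Y[of a y] assms \<open>y \<in> Y\<close> by blast
  ultimately show "y \<in> line V d a z"
    unfolding mem_line_iff collinear3_def between_def using dist_sym by auto
qed

lemma Z_notin_line_X_Y_Z:
  assumes "a \<in> X_Y" "z \<in> Z" "z' \<in> Z" "z' \<noteq> z"
  shows "z' \<notin> line V d a z"
proof (rule notin_line_isosceles[OF dist_sym])
  have "Y \<noteq> {}"
    using X_Y_neighbour[OF assms(1)] by blast
  then show "0 < d z z'" "d z z' < 2 * d a z"
    using swap.dist_Y_Y assms dist_X_Y_Z by simp_all
  show "d a z' = d a z"
    using dist_X_Y_Z assms by simp
  show "z' \<noteq> a"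
    using assms X_Y_subset disjoint by blast
qed fact

lemma Z_subset_line_X_Y_Y:
  assumes "a \<in> X_Y" "y \<in> Y" "\<not> E a y"
  shows "Z \<subseteq> line V d a y"
proof
  fix z assume "z \<in> Z"
  then have "d a z = 2" "d z y = 1" "d a y = 3" "z \<in> V"
    using dist_X_Y_Z dist_X_Y_Y dist_Y_Z dist_sym V_eq assms by auto
  then show "z \<in> line V d a y"
    unfolding mem_line_iff collinear3_def between_def by auto
qed

lemma X_Z_notin_line_X_Y_Y:
  assumes "a \<in> X_Y" "y \<in> Y" "\<not> E a y" "b \<in> X_Z"
  shows "b \<notin> line V d a y"
proof (rule notin_line_isosceles[OF dist_sym])
  have "Z \<noteq> {}"
    using swap.X_Y_neighbour[OF assms(4)] by blast
  then show "d a b = d a y" "0 < d y b" "d y b < 2 * d a y"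
    using dist_X_Y_X_Z dist_X_Y_Y swap.dist_X_Y_Z dist_sym assms by simp_all
  show "b \<noteq> a" "b \<noteq> y"
    using assms X_Y_X_Z_disjoint swap.X_Y_subset disjoint by blast+
qed

lemma Y_notin_line_X_Y_X_Z:
  assumes "a \<in> X_Y" "b \<in> X_Z" "y \<in> Y" "\<not> E a y"
  shows "y \<notin> line V d a b"
proof (rule notin_line_isosceles[OF dist_sym])
  have "Z \<noteq> {}"
    using swap.X_Y_neighbour[OF assms(2)] by blast
  then show "d a y = d a b" "0 < d b y" "d b y < 2 * d a b"
    using dist_X_Y_X_Z dist_X_Y_Y swap.dist_X_Y_Z assms by simp_all
  show "y \<noteq> a" "y \<noteq> b"
    using assms X_Y_subset swap.X_Y_subset disjoint by blast+
qed

lemma X_Z_notin_line_X_Y_X_Z: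
  assumes "a \<in> X_Y" "b \<in> X_Z" "b' \<in> X_Z" "b' \<noteq> b"
  shows "b' \<notin> line V d a b"
proof (rule notin_line_isosceles[OF dist_sym])
  have "Y \<noteq> {}"
    using X_Y_neighbour[OF assms(1)] by blast
  then have "d b b' \<le> 4"
    using swap.dist_X_Y_X_Y assms by blast
  moreover have "1 \<le> d b b'"
    using dist_ge_1 assms swap.X_Y_subset V_eq by blast
  ultimately show "0 < d b b'" "d b b' < 2 * d a b"
    using dist_X_Y_X_Z assms by simp_all
  show "d a b' = d a b"
    using dist_X_Y_X_Z assms by simp
  show "b' \<noteq> a"
    using assms X_Y_X_Z_disjoint by blast
qed fact

lemma X_Z_notin_line_X_Y_mixed:
  assumes "a \<in> X_Y" "m \<in> X" "m \<notin> X_Y" "m \<notin> X_Z" "b \<in> X_Z"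
  shows "b \<notin> line V d a m"
proof (rule notin_line_short_sides[OF dist_sym, where k = 2])
  have a: "a \<in> X" "a \<notin> X_Z" and b: "b \<in> X" "b \<notin> X_Y"
    using assms X_Y_subset swap.X_Y_subset X_Y_X_Z_disjoint by blast+
  show "b \<noteq> a" "b \<noteq> m"
    using assms a b by blast+
  show "2 \<le> d a m" "2 \<le> d a b" "2 \<le> d m b"
    using dist_X_X assms a b by blast+
  show "d a m < 2 * 2" "d a b < 2 * 2" "d m b < 2 * 2"
    using dist_X_le_3[of a m] dist_X_le_3[of m b] dist_X_Y_X_Z assms a b by simp_all
qed

lemma mixed_notin_line_X_Y_mixed:
  assumes "a \<in> X_Y" "m \<in> X" "m \<notin> X_Y" "m \<notin> X_Z"
    and "m' \<in> X" "m' \<notin> X_Y" "m' \<notin> X_Z" "m' \<noteq> m"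
  shows "m' \<notin> line V d a m"
proof (rule notin_line_short_sides[OF dist_sym, where k = 2])
  have a: "a \<in> X" "a \<notin> X_Z"
    using assms X_Y_subset X_Y_X_Z_disjoint by blast+
  show "m' \<noteq> a"
    using assms by blast
  show "2 \<le> d a m" "2 \<le> d a m'" "2 \<le> d m m'"
    using dist_X_X assms a by blast+
  show "d a m < 2 * 2" "d a m' < 2 * 2" "d m m' < 2 * 2"
    using dist_X_le_3[of a m] dist_X_le_3[of a m'] dist_X_le_3[of m m'] assms a by simp_all
qed fact

lemma line_X_Y_mixed_misses_Z_or_Y:
  assumes "a \<in> X_Y" "m \<in> X" "m \<notin> X_Y" "m \<notin> X_Z" "y \<in> Y" "\<not> E a y"
  shows "Z \<inter> line V d a m = {} \<or> y \<notin> line V d a m"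
proof -
  obtain y' z' where y': "y' \<in> Y" "E m y'" and z': "z' \<in> Z" "E m z'"
    using not_X_Y_Z_neighbour swap.not_X_Y_Z_neighbour assms(2-4) by metis
  have a: "a \<in> X" "a \<notin> X_Z"
    using assms(1) X_Y_subset X_Y_X_Z_disjoint by blast+
  have m: "m \<in> V" "m \<noteq> a"
    using assms(1-3) V_eq by blast+
  have "2 \<le> d a m" "d a m \<le> 3"
    using dist_X_X[OF a(1) assms(2)] dist_X_le_3[OF a assms(2,3)] m(2) by auto
  then consider "d a m = 2" | "d a m = 3"
    by linarith
  then show ?thesis
  proof cases
    case 1
    have "z \<notin> line V d a m" if "z \<in> Z" for z
    proof (rule notin_line_isosceles[OF dist_sym])
      show "z \<noteq> a" "z \<noteq> m"
        using that a(1) assms(2) disjoint(2) by blast+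
      then have "1 \<le> d m z"
        using dist_ge_1 m(1) that V_eq by blast
      then show "0 < d m z" "d m z < 2 * d a m"
        using dist_le_2_via_Y[OF y' that] 1 by simp_all
      show "d a z = d a m"
        using 1 dist_X_Y_Z assms(1) that by simp
    qed
    then show ?thesis by blast
  next
    case 2
    have "y \<notin> line V d a m"
    proof (rule notin_line_isosceles[OF dist_sym])
      show "y \<noteq> a" "y \<noteq> m"
        using assms(5) a(1) assms(2) disjoint(1) by blast+
      then have "1 \<le> d m y"
        using dist_ge_1 m(1) assms(5) V_eq by blast
      then show "0 < d m y" "d m y < 2 * d a m"
        using swap.dist_le_2_via_Y[OF z' assms(5)] 2 by simp_all
      show "d a y = d a m"
        using 2 dist_X_Y_Y[OF _ assms(1,5,6)] z'(1) by auto
    qed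
    then show ?thesis by blast
  qed
qed

end

locale bisplit_witnesses = maximal_bisplit +
  fixes a0 b0 y0 :: 'a
  assumes a0: "a0 \<in> X_Y" and b0: "b0 \<in> X_Z" and y0: "y0 \<in> Y" "\<not> E a0 y0"
begin

(* The line through a0 and b0 is already the line of b0, hence a0 gets the line through y0. *)
definition vertex_line :: "'a \<Rightarrow> 'a set" where
  "vertex_line v =
     (if v \<in> Y \<union> (X_Y - {a0}) then line V d b0 v
      else if v = a0 then line V d a0 y0 else line V d a0 v)"

lemma mem_vertex_line: "v \<in> vertex_line v"
  unfolding vertex_line_def line_def by simp

lemma vertex_line_in_lines:
  assumes "v \<in> V"
  shows "vertex_line v \<in> lines V d"
proof -
  have "a0 \<in> V" "b0 \<in> V" "y0 \<in> V" "a0 \<noteq> y0" "b0 \<notin> Y \<union> X_Y"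
    using a0 b0 y0 X_Y_subset swap.X_Y_subset X_Y_X_Z_disjoint disjoint(1) V_eq by blast+
  then show ?thesis
    using assms unfolding vertex_line_def lines_def by auto
qed

lemma Z_not_subset_singleton: "\<not> Z \<subseteq> {z}"
proof -
  obtain z' z'' where "z' \<in> Z" "E b0 z'" "z'' \<in> Z" "\<not> E b0 z''"
    using swap.X_Y_neighbour[OF b0] swap.X_Y_nonneighbour[OF b0] by metis
  then show ?thesis
    by blast
qed

lemma vertex_line_Y:
  assumes "y \<in> Y"
  shows "b0 \<in> vertex_line y" "Z \<subseteq> vertex_line y" "Y \<inter> vertex_line y \<subseteq> {y}"
proof -
  have "vertex_line y = line V d b0 y"
    using assms unfolding vertex_line_def by simp
  then show "b0 \<in> vertex_line y" "Z \<subseteq> vertex_line y" "Y \<inter> vertex_line y \<subseteq> {y}"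
    using swap.Y_subset_line_X_Y_Z[OF b0 assms] swap.Z_notin_line_X_Y_Z[OF b0 assms]
    unfolding line_def by auto
qed

lemma vertex_line_X_Y:
  assumes "a \<in> X_Y" "a \<noteq> a0"
  shows "b0 \<in> vertex_line a" "a0 \<notin> vertex_line a" "X_Y \<inter> vertex_line a \<subseteq> {a}"
    "\<not> Z \<subseteq> vertex_line a"
proof -
  have f: "vertex_line a = line V d b0 a"
    using assms unfolding vertex_line_def by simp
  obtain z where "z \<in> Z" "\<not> E b0 z"
    using swap.X_Y_nonneighbour[OF b0] .
  then show "\<not> Z \<subseteq> vertex_line a"
    using swap.Y_notin_line_X_Y_X_Z[OF b0 assms(1)] f by blast
  show "b0 \<in> vertex_line a" "a0 \<notin> vertex_line a" "X_Y \<inter> vertex_line a \<subseteq> {a}"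
    using swap.X_Z_notin_line_X_Y_X_Z[OF b0 assms(1)] a0 assms(2) f unfolding line_def by auto
qed

lemma vertex_line_a0:
  shows "y0 \<in> vertex_line a0" "Z \<subseteq> vertex_line a0" "X_Z \<inter> vertex_line a0 = {}"
proof -
  have "vertex_line a0 = line V d a0 y0"
    using a0 X_Y_subset disjoint(1) unfolding vertex_line_def by auto
  then show "y0 \<in> vertex_line a0" "Z \<subseteq> vertex_line a0" "X_Z \<inter> vertex_line a0 = {}"
    using Z_subset_line_X_Y_Y[OF a0 y0] X_Z_notin_line_X_Y_Y[OF a0 y0] unfolding line_def by auto
qed

lemma vertex_line_through_a0:
  assumes "v \<notin> Y" "v \<notin> X_Y"
  shows "vertex_line v = line V d a0 v"
  using assms a0 unfolding vertex_line_def by auto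

lemma vertex_line_Z:
  assumes "z \<in> Z"
  shows "a0 \<in> vertex_line z" "Y \<subseteq> vertex_line z" "Z \<inter> vertex_line z \<subseteq> {z}"
proof -
  have "vertex_line z = line V d a0 z"
    by (rule vertex_line_through_a0) (use assms disjoint X_Y_subset in blast)+
  then show "a0 \<in> vertex_line z" "Y \<subseteq> vertex_line z" "Z \<inter> vertex_line z \<subseteq> {z}"
    using Y_subset_line_X_Y_Z[OF a0 assms] Z_notin_line_X_Y_Z[OF a0 assms] unfolding line_def by auto
qed

lemma vertex_line_X_Z:
  assumes "b \<in> X_Z"
  shows "a0 \<in> vertex_line b" "y0 \<notin> vertex_line b" "X_Z \<inter> vertex_line b \<subseteq> {b}"
    "\<not> Z \<subseteq> vertex_line b"
proof -
  have f: "vertex_line b = line V d a0 b"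
    by (rule vertex_line_through_a0) (use assms disjoint X_Y_X_Z_disjoint swap.X_Y_subset in blast)+
  obtain z where "z \<in> Z" "\<not> E b z"
    using swap.X_Y_nonneighbour[OF assms] .
  then show "\<not> Z \<subseteq> vertex_line b"
    using swap.Y_notin_line_X_Y_X_Z[OF assms a0] line_sym f by blast
  show "a0 \<in> vertex_line b" "y0 \<notin> vertex_line b" "X_Z \<inter> vertex_line b \<subseteq> {b}"
    using Y_notin_line_X_Y_X_Z[OF a0 assms y0] X_Z_notin_line_X_Y_X_Z[OF a0 assms] f
    unfolding line_def by auto
qed

lemma vertex_line_mixed:
  assumes "m \<in> X" "m \<notin> X_Y" "m \<notin> X_Z"
  shows "a0 \<in> vertex_line m" "X_Z \<inter> vertex_line m = {}"
    "X_mixed \<inter> vertex_line m \<subseteq> {m}" "Z \<inter> vertex_line m = {} \<or> y0 \<notin> vertex_line m"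
proof -
  have f: "vertex_line m = line V d a0 m"
    by (rule vertex_line_through_a0) (use assms disjoint in blast)+
  then show "a0 \<in> vertex_line m"
    unfolding line_def by simp
  show "X_Z \<inter> vertex_line m = {}"
    using X_Z_notin_line_X_Y_mixed[OF a0 assms] f by blast
  show "X_mixed \<inter> vertex_line m \<subseteq> {m}"
    using mixed_notin_line_X_Y_mixed[OF a0 assms] f by blast
  show "Z \<inter> vertex_line m = {} \<or> y0 \<notin> vertex_line m"
    using line_X_Y_mixed_misses_Z_or_Y[OF a0 assms y0] f by simp
qed

lemma inj_on_vertex_line_if_inter_singleton:
  assumes "\<And>u. u \<in> C \<Longrightarrow> C \<inter> vertex_line u \<subseteq> {u}"
  shows "inj_on vertex_line C"
  using assms mem_vertex_line unfolding inj_on_def by blast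

lemma inj_on_b0_side: "inj_on vertex_line (Y \<union> (X_Y - {a0}))"
proof (rule inj_on_Un_disjoint_images)
  show "inj_on vertex_line Y"
    using vertex_line_Y(3) by (rule inj_on_vertex_line_if_inter_singleton)
  show "inj_on vertex_line (X_Y - {a0})"
    using vertex_line_X_Y(3) by (intro inj_on_vertex_line_if_inter_singleton) blast
  show "vertex_line ` Y \<inter> vertex_line ` (X_Y - {a0}) = {}"
    using vertex_line_Y(2) vertex_line_X_Y(4) by fastforce
qed

lemma vertex_line_a0_notin_image:
  "vertex_line a0 \<notin> vertex_line ` (Z \<union> (X_Z \<union> X_mixed))"
proof -
  have "vertex_line z \<noteq> vertex_line a0" if "z \<in> Z" for z
    using vertex_line_a0(2) vertex_line_Z(3)[OF that] Z_not_subset_singleton by blast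
  moreover have "vertex_line b \<noteq> vertex_line a0" if "b \<in> X_Z" for b
    using vertex_line_a0(3) mem_vertex_line[of b] that by blast
  moreover have "vertex_line m \<noteq> vertex_line a0" if "m \<in> X_mixed" for m
    using vertex_line_a0(1,2) vertex_line_mixed(4)[of m] that Z_not_subset_singleton by blast
  ultimately show ?thesis by blast
qed

lemma inj_on_a0_side: "inj_on vertex_line (insert a0 (Z \<union> (X_Z \<union> X_mixed)))"
  unfolding inj_on_insert
proof (intro conjI inj_on_Un_disjoint_images)
  show "inj_on vertex_line Z"
    using vertex_line_Z(3) by (rule inj_on_vertex_line_if_inter_singleton)
  show "inj_on vertex_line X_Z"
    using vertex_line_X_Z(3) by (rule inj_on_vertex_line_if_inter_singleton)
  show "inj_on vertex_line X_mixed"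
    using vertex_line_mixed(3) by (intro inj_on_vertex_line_if_inter_singleton) blast
  show "vertex_line ` X_Z \<inter> vertex_line ` X_mixed = {}"
    using vertex_line_mixed(2) mem_vertex_line by fastforce
  have "\<not> (Z \<inter> vertex_line v \<noteq> {} \<and> y0 \<in> vertex_line v)" if "v \<in> X_Z \<union> X_mixed" for v
    using that vertex_line_X_Z(2) vertex_line_mixed(4) by blast
  moreover have "Z \<inter> vertex_line z \<noteq> {} \<and> y0 \<in> vertex_line z" if "z \<in> Z" for z
    using that vertex_line_Z(2) mem_vertex_line y0(1) by blast
  ultimately show "vertex_line ` Z \<inter> vertex_line ` (X_Z \<union> X_mixed) = {}"
    by fastforce
  show "vertex_line a0 \<notin> vertex_line ` (Z \<union> (X_Z \<union> X_mixed) - {a0})"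
    using vertex_line_a0_notin_image by blast
qed

lemma vertex_line_sides_disjoint:
  "vertex_line ` (Y \<union> (X_Y - {a0})) \<inter> vertex_line ` insert a0 (Z \<union> (X_Z \<union> X_mixed)) = {}"
proof -
  have b0_side: "b0 \<in> vertex_line u \<and> (a0 \<in> vertex_line u \<longrightarrow> Z \<subseteq> vertex_line u)"
    if "u \<in> Y \<union> (X_Y - {a0})" for u
    using that vertex_line_Y(1,2) vertex_line_X_Y(1,2) by blast
  have a0_side: "a0 \<in> vertex_line v \<and> (b0 \<in> vertex_line v \<longrightarrow> \<not> Z \<subseteq> vertex_line v)"
    if v: "v \<in> insert a0 (Z \<union> (X_Z \<union> X_mixed))" for v
  proof -
    consider "v = a0" | "v \<in> Z" | "v \<in> X_Z" | "v \<in> X" "v \<notin> X_Y" "v \<notin> X_Z"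
      using v by blast
    then show ?thesis
    proof cases
      case 1
      then show ?thesis
        using mem_vertex_line[of a0] vertex_line_a0(3) b0 by blast
    next
      case 2
      then show ?thesis
        using vertex_line_Z(1,3)[OF 2] Z_not_subset_singleton[of v] by blast
    next
      case 3
      then show ?thesis
        using vertex_line_X_Z(1,4)[OF 3] by blast
    next
      case 4
      then show ?thesis
        using vertex_line_mixed(1,2)[OF 4] b0 by blast
    qed
  qed
  have "vertex_line u \<noteq> vertex_line v"
    if "u \<in> Y \<union> (X_Y - {a0})" "v \<in> insert a0 (Z \<union> (X_Z \<union> X_mixed))" for u v
    using b0_side[OF that(1)] a0_side[OF that(2)] by metis
  then show ?thesis
    by blast
qed

lemma inj_on_vertex_line: "inj_on vertex_line V"
proof -
  have "V = (Y \<union> (X_Y - {a0})) \<union> insert a0 (Z \<union> (X_Z \<union> X_mixed))"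
    using V_eq a0 X_Y_subset swap.X_Y_subset by blast
  then show ?thesis
    using inj_on_Un_disjoint_images[OF inj_on_b0_side inj_on_a0_side vertex_line_sides_disjoint]
    by simp
qed

end

theorem proposition2:
  fixes V :: "'a set" and E :: "'a \<Rightarrow> 'a \<Rightarrow> bool" and X Y Z :: "'a set"
  assumes "connected_graph V E"
    and "bisplit_partition V E X Y Z"
    and "\<forall>X' Y' Z'. bisplit_partition V E X' Y' Z' \<longrightarrow> card (Y' \<union> Z') \<le> card (Y \<union> Z)"
    and "{x \<in> X. \<forall>w. E x w \<longrightarrow> w \<in> Y} \<noteq> {}"
    and "{x \<in> X. \<forall>w. E x w \<longrightarrow> w \<in> Z} \<noteq> {}"
  shows "de_bruijn_erdos V (gdist V E)"
proof -
  interpret maximal_bisplit V E X Y Z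
    using assms(1-3) by unfold_locales
  obtain a0 b0 where "a0 \<in> X_Y" "b0 \<in> X_Z"
    using assms(4,5) unfolding X_Y_def swap.X_Y_def by blast
  moreover obtain y0 where "y0 \<in> Y" "\<not> E a0 y0"
    using X_Y_nonneighbour[OF \<open>a0 \<in> X_Y\<close>] .
  ultimately interpret bisplit_witnesses V E X Y Z a0 b0 y0
    by unfold_locales
  show ?thesis
    by (intro de_bruijn_erdos_if_inj_on[OF finite_V inj_on_vertex_line] image_subsetI vertex_line_in_lines)
qed

end
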